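(* Let $\mathbf{x}$ be an infinite word satisfying $r(i,\mathbf{x})\le 2i+1$ for all $i\ge1$. Let $m,n$ be positive integers with $r(n,\mathbf{x})=2n+1$ and $m\ge 2n+1$. If $k$ is the integer with $r(k-1,\mathbf{x})<m\le r(k,\mathbf{x})$, then $k\ge n$ and $r(k,\mathbf{x})-k\le m-n$.
   Context: For $\mathbf{x}=x_1x_2\ldots$, $x_i^j=x_i\cdots x_j$ (empty if $j<i$) and for $n\ge0$, $r(n,\mathbf{x})=\min\{m\ge1:\ x_i^{i+n-1}=x_{m-n+1}^{m}\text{ for some } 1\le i\le m-n\}$ (so $r(0,\mathbf{x})=1$); $n\mapsto r(n,\mathbf{x})$ is strictly increasing. *)

theory Defs
  imports Main
begin

text \<open>An infinite word x = x_1 x_2 ... is modelled as a function nat => 'a;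
  position 1 is the first letter (the value at 0 is ignored).
  The factor x_i^{i+n-1} equals x_{m-n+1}^m.\<close>

definition rep_at :: "(nat \<Rightarrow> 'a) \<Rightarrow> nat \<Rightarrow> nat \<Rightarrow> bool" where
  "rep_at x n m \<longleftrightarrow> m \<ge> 1 \<and>
     (\<exists>i. 1 \<le> i \<and> i + n \<le> m \<and> (\<forall>t<n. x (i + t) = x (m - n + 1 + t)))"

definition r :: "nat \<Rightarrow> (nat \<Rightarrow> 'a) \<Rightarrow> nat" where
  "r n x = (LEAST m. rep_at x n m)"

end

theory Submission
  imports Defs
begin

text \<open>Deleting the last letter of a repeated factor of length n+1 ending at m leaves a repeated
  factor of length n ending at m-1, so r(n+1,x) > r(n,x). Hence r grows by at least d from
  n to n+d. If k < n, then m \<le> r(k,x) \<le> r(n,x) - (n-k) < 2n+1 \<le> m, which is absurd.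
  If k > n, then m > r(k-1,x) \<ge> r(n,x) + (k-1-n) = n+k, and r(k,x) - k \<le> k+1 \<le> m-n.\<close>

lemma rep_at_drop_last:
  assumes "rep_at x (Suc n) m"
  shows "rep_at x n (m - 1)"
proof -
  obtain i where i: "1 \<le> i" "i + Suc n \<le> m" "\<forall>t<Suc n. x (i + t) = x (m - Suc n + 1 + t)"
    using assms unfolding rep_at_def by blast
  have "\<forall>t<n. x (i + t) = x (m - 1 - n + 1 + t)"
  proof (intro allI impI)
    fix t assume "t < n"
    then have "x (i + t) = x (m - Suc n + 1 + t)" using i(3) by simp
    moreover have "m - Suc n + 1 + t = m - 1 - n + 1 + t" using i(2) by simp
    ultimately show "x (i + t) = x (m - 1 - n + 1 + t)" by simp
  qed
  then show ?thesis unfolding rep_at_def using i(1,2) by auto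
qed

lemma rep_at_r:
  assumes "\<exists>m. rep_at x n m"
  shows "rep_at x n (r n x)"
  unfolding r_def using assms by (rule LeastI_ex)

lemma r_le:
  assumes "rep_at x n m"
  shows "r n x \<le> m"
  unfolding r_def using assms by (rule Least_le)

lemma r_Suc_gt:
  assumes "\<exists>m. rep_at x (Suc n) m"
  shows "r n x < r (Suc n) x"
proof -
  have rep: "rep_at x (Suc n) (r (Suc n) x)" using assms by (rule rep_at_r)
  then have "r (Suc n) x \<ge> 2" unfolding rep_at_def by auto
  moreover have "r n x \<le> r (Suc n) x - 1" using rep_at_drop_last[OF rep] by (rule r_le)
  ultimately show ?thesis by simp
qed

lemma r_add_ge:
  assumes "\<And>i. \<exists>m. rep_at x i m"
  shows "r n x + d \<le> r (n + d) x"
proof (induction d)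
  case 0
  then show ?case by simp
next
  case (Suc d)
  then show ?case using r_Suc_gt[of x "n + d"] assms by simp
qed

theorem lemma5p6:
  fixes x :: "nat \<Rightarrow> 'a" and m n k :: nat
  assumes defined: "\<And>i. \<exists>m'. rep_at x i m'"
    and bound: "\<And>i. i \<ge> 1 \<Longrightarrow> r i x \<le> 2 * i + 1"
    and n_pos: "n \<ge> 1" and m_pos: "m \<ge> 1"
    and rn: "r n x = 2 * n + 1"
    and mge: "m \<ge> 2 * n + 1"
    and k_pos: "k \<ge> 1"
    and k_lo: "r (k - 1) x < m" and k_hi: "m \<le> r k x"
  shows "k \<ge> n \<and> int (r k x) - int k \<le> int m - int n"
proof -
  have kn: "k \<ge> n"
  proof (rule ccontr)
    assume "\<not> n \<le> k"
    then have "r k x + (n - k) \<le> r n x" using r_add_ge[OF defined, of k "n - k"] by simp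
    then show False using \<open>\<not> n \<le> k\<close> rn mge k_hi by simp
  qed
  show ?thesis
  proof (cases "k = n")
    case True
    then show ?thesis using rn mge k_hi by simp
  next
    case False
    then have "r n x + (k - 1 - n) \<le> r (k - 1) x"
      using kn r_add_ge[OF defined, of n "k - 1 - n"] by simp
    then have "m \<ge> n + k + 1" using rn k_lo False kn by simp
    moreover have "r k x \<le> 2 * k + 1" using bound k_pos by simp
    ultimately show ?thesis using kn by simp
  qed
qed

end
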